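(* If $\mathsf{A}^{i+1}=\{0\}$, then $[\varpi]^i\colon\mathsf{B}^i\to\mathsf{A}^i$ is surjective.
   Context: Let $A$ be the graded commutative algebra of functions of a graded manifold with a flat $P_\infty$-structure $\lambda_i$, $\mathrm{d}:=\lambda_1$, $\mathsf{A}=H_{\mathrm{d}}(A)$. Given a flat $A_\infty$ deformation quantization $\mu_i$ on $A[[\epsilon]]$, set $\tau_i=\epsilon^{i-2}\mu_i$, $\delta:=\tau_1=\sum_{n\ge0}\epsilon^n\mathrm{d}_n$ with $\mathrm{d}_0=\mathrm{d}$, and $\mathsf{B}$ the $\delta$-cohomology of $A[[\epsilon]]$. Let $\varpi\colon A[[\epsilon]]\to A$, $\sum\epsilon^n a_n\mapsto a_0$, a chain map $(A[[\epsilon]],\delta)\to(A,\mathrm{d})$, and $[\varpi]^i\colon\mathsf{B}^i\to\mathsf{A}^i$ the induced map in degree $i$. *)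

theory Defs
  imports Complex_Main "HOL-Library.Function_Algebras"
begin

text \<open>Cohomology of a degree-1 operator D on a graded space with homogeneous
pieces C i (degrees are integers).  Cohomology classes are cosets z + B^i.\<close>

definition cocycles :: "('v::ab_group_add \<Rightarrow> 'v) \<Rightarrow> (int \<Rightarrow> 'v set) \<Rightarrow> int \<Rightarrow> 'v set" where
  "cocycles D C i = {x \<in> C i. D x = 0}"

definition coboundaries :: "('v::ab_group_add \<Rightarrow> 'v) \<Rightarrow> (int \<Rightarrow> 'v set) \<Rightarrow> int \<Rightarrow> 'v set" where
  "coboundaries D C i = D ` C (i - 1)"

definition cls :: "('v::ab_group_add \<Rightarrow> 'v) \<Rightarrow> (int \<Rightarrow> 'v set) \<Rightarrow> int \<Rightarrow> 'v \<Rightarrow> 'v set" where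
  "cls D C i z = (\<lambda>b. z + b) ` coboundaries D C i"

definition cohom :: "('v::ab_group_add \<Rightarrow> 'v) \<Rightarrow> (int \<Rightarrow> 'v set) \<Rightarrow> int \<Rightarrow> 'v set set" where
  "cohom D C i = cls D C i ` cocycles D C i"

definition induced ::
  "('v \<Rightarrow> 'w::ab_group_add) \<Rightarrow> ('w \<Rightarrow> 'w) \<Rightarrow> (int \<Rightarrow> 'w set) \<Rightarrow> int \<Rightarrow> 'v set \<Rightarrow> 'w set" where
  "induced phi D' C' i c = cls D' C' i (phi (SOME z. z \<in> c))"

text \<open>Homogeneous elements of degree i of A[[eps]] (eps has degree 0):
  sequences of coefficients all lying in A^i.\<close>
definition pser :: "(int \<Rightarrow> 'v set) \<Rightarrow> int \<Rightarrow> (nat \<Rightarrow> 'v) set" where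
  "pser A i = {f. \<forall>n. f n \<in> A i}"

text \<open>delta = sum_n eps^n d_n acting on formal power series.\<close>
definition delta :: "(nat \<Rightarrow> 'v \<Rightarrow> 'v::ab_group_add) \<Rightarrow> (nat \<Rightarrow> 'v) \<Rightarrow> nat \<Rightarrow> 'v" where
  "delta d f = (\<lambda>n. \<Sum>p\<le>n. d p (f (n - p)))"

definition varpi :: "(nat \<Rightarrow> 'v) \<Rightarrow> 'v" where
  "varpi f = f 0"

end

theory Submission
  imports Defs
begin

text \<open>Forgetting all but the constant term is a cochain map, so it induces a map on
  cohomology; only surjectivity needs an argument. Given a \<open>d\<^sub>0\<close>-cocycle \<open>x\<close>,
  a \<open>\<delta>\<close>-cocycle \<open>x + \<epsilon> f\<^sub>1 + \<epsilon>\<^sup>2 f\<^sub>2 + \<dots>\<close> is built order by order. If the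
  truncation \<open>g\<close> at order \<open>n\<close> is a \<open>\<delta>\<close>-cocycle modulo \<open>\<epsilon>\<^sup>n\<^sup>+\<^sup>1\<close>, then the
  coefficient of \<open>\<epsilon>\<^sup>n\<^sup>+\<^sup>1\<close> in \<open>\<delta> g\<close> is a \<open>d\<^sub>0\<close>-cocycle of degree \<open>i + 1\<close>, because
  \<open>\<delta>\<^sup>2 = 0\<close>. Since \<open>H\<^sup>i\<^sup>+\<^sup>1(A) = 0\<close> it equals \<open>d\<^sub>0 w\<close>, and \<open>f\<^sub>n\<^sub>+\<^sub>1 = -w\<close> kills it.\<close>

locale graded_subgroups =
  fixes C :: "int \<Rightarrow> 'v::ab_group_add set"
  assumes zero_mem [simp]: "0 \<in> C j"
    and add_mem: "x \<in> C j \<Longrightarrow> y \<in> C j \<Longrightarrow> x + y \<in> C j"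
    and uminus_mem: "x \<in> C j \<Longrightarrow> - x \<in> C j"
begin

lemma diff_mem: "x \<in> C j \<Longrightarrow> y \<in> C j \<Longrightarrow> x - y \<in> C j"
  using add_mem[of x j "- y"] uminus_mem by simp

lemma translate_image: "b \<in> C j \<Longrightarrow> (+) b ` C j = C j"
proof (intro equalityI subsetI)
  fix x assume "b \<in> C j" "x \<in> C j"
  then have "x - b \<in> C j" by (rule diff_mem[rotated])
  then show "x \<in> (+) b ` C j" by (rule rev_image_eqI) simp
qed (auto intro: add_mem)

lemma sum_mem: "(\<And>k. k \<in> K \<Longrightarrow> f k \<in> C j) \<Longrightarrow> sum f K \<in> C j"
  by (induction K rule: infinite_finite_induct) (auto intro: add_mem)

end

locale graded_operator = graded_subgroups C for C :: "int \<Rightarrow> 'v::ab_group_add set" +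
  fixes D :: "'v \<Rightarrow> 'v"
  assumes D_add: "D (x + y) = D x + D y"
    and D_degree: "x \<in> C j \<Longrightarrow> D x \<in> C (j + 1)"
begin

lemma D_zero [simp]: "D 0 = 0"
  using D_add[of 0 0] by simp

lemma D_uminus: "D (- x) = - D x"
  using D_add[of x "- x"] by (simp add: minus_unique)

lemma zero_mem_coboundaries: "0 \<in> coboundaries D C j"
  unfolding coboundaries_def by (metis D_zero image_eqI zero_mem)

lemma mem_cls_self: "z \<in> cls D C j z"
  unfolding cls_def using zero_mem_coboundaries by (metis add.right_neutral image_eqI)

lemma cls_add_coboundary:
  assumes "b \<in> C (j - 1)"
  shows "cls D C j (z + D b) = cls D C j z"
proof -
  have "cls D C j (z + D b) = (\<lambda>a. z + D a) ` ((+) b ` C (j - 1))"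
    unfolding cls_def coboundaries_def image_image by (simp add: D_add add.assoc)
  also have "\<dots> = cls D C j z"
    unfolding cls_def coboundaries_def image_image translate_image[OF assms] ..
  finally show ?thesis .
qed

lemma some_mem_cls: "\<exists>g \<in> C (j - 1). (SOME z. z \<in> cls D C j f) = f + D g"
proof -
  have "(SOME z. z \<in> cls D C j f) \<in> cls D C j f"
    using mem_cls_self by (rule someI)
  then show ?thesis unfolding cls_def coboundaries_def by blast
qed

lemma coboundary_if_cohom_trivial:
  assumes "cohom D C j = {cls D C j 0}" and "z \<in> cocycles D C j"
  shows "z \<in> coboundaries D C j"
proof -
  have "cls D C j z = cls D C j 0"
    using assms unfolding cohom_def by blast
  then show ?thesis
    using mem_cls_self[of z j] unfolding cls_def by simp
qed

end

locale cochain_map =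
  src: graded_operator C D + tgt: graded_operator C' D'
  for C :: "int \<Rightarrow> 'v::ab_group_add set" and D
    and C' :: "int \<Rightarrow> 'w::ab_group_add set" and D' +
  fixes phi :: "'v \<Rightarrow> 'w"
  assumes phi_add: "phi (x + y) = phi x + phi y"
    and phi_degree: "x \<in> C j \<Longrightarrow> phi x \<in> C' j"
    and phi_commute: "x \<in> C j \<Longrightarrow> phi (D x) = D' (phi x)"
begin

lemma phi_zero [simp]: "phi 0 = 0"
  using phi_add[of 0 0] by simp

lemma phi_cocycle: "f \<in> cocycles D C j \<Longrightarrow> phi f \<in> cocycles D' C' j"
  unfolding cocycles_def by (auto intro: phi_degree simp flip: phi_commute)

lemma induced_cls: "induced phi D' C' j (cls D C j f) = cls D' C' j (phi f)"
proof -
  obtain g where g: "g \<in> C (j - 1)" and some: "(SOME z. z \<in> cls D C j f) = f + D g"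
    using src.some_mem_cls by blast
  have "phi (f + D g) = phi f + D' (phi g)"
    using g by (simp add: phi_add phi_commute)
  then show ?thesis
    unfolding induced_def some using tgt.cls_add_coboundary[OF phi_degree[OF g]] by simp
qed

lemma induced_cohom_subset: "induced phi D' C' j ` cohom D C j \<subseteq> cohom D' C' j"
  unfolding cohom_def by (auto simp: induced_cls intro: phi_cocycle)

lemma induced_cohom_eq_if_cocycles_lift:
  assumes "\<And>x. x \<in> cocycles D' C' j \<Longrightarrow> \<exists>f \<in> cocycles D C j. phi f = x"
  shows "induced phi D' C' j ` cohom D C j = cohom D' C' j"
proof
  show "cohom D' C' j \<subseteq> induced phi D' C' j ` cohom D C j"
    unfolding cohom_def using assms by (force simp: induced_cls)
qed (rule induced_cohom_subset)

end

lemma delta_Suc: "delta d f (Suc n) = d 0 (f (Suc n)) + (\<Sum>p\<le>n. d (Suc p) (f (n - p)))"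
  unfolding delta_def by (simp only: sum.atMost_Suc_shift) simp

lemma delta_cong: "(\<And>k. k \<le> m \<Longrightarrow> f k = g k) \<Longrightarrow> delta d f m = delta d g m"
  unfolding delta_def by (intro sum.cong) auto

lemma graded_operator_delta:
  assumes "\<And>n. graded_operator A (d n)"
  shows "graded_operator (pser A) (delta d)"
proof unfold_locales
  interpret d: graded_operator A "d n" for n by (rule assms)
  fix j f g
  show "0 \<in> pser A j" by (simp add: pser_def)
  show "f \<in> pser A j \<Longrightarrow> g \<in> pser A j \<Longrightarrow> f + g \<in> pser A j"
    by (simp add: pser_def d.add_mem)
  show "f \<in> pser A j \<Longrightarrow> - f \<in> pser A j"
    by (simp add: pser_def d.uminus_mem)
  show "delta d (f + g) = delta d f + delta d g"
    by (simp add: delta_def fun_eq_iff d.D_add sum.distrib)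
  show "f \<in> pser A j \<Longrightarrow> delta d f \<in> pser A (j + 1)"
    by (simp add: pser_def delta_def d.sum_mem d.D_degree)
qed

lemma cochain_map_varpi:
  assumes "\<And>n. graded_operator A (d n)"
  shows "cochain_map (pser A) (delta d) A (d 0) varpi"
proof -
  interpret d: graded_operator A "d n" for n by (rule assms)
  show ?thesis
    by (intro cochain_map.intro graded_operator_delta assms cochain_map_axioms.intro)
      (simp_all add: varpi_def pser_def delta_def)
qed

lemma d0_lowest_coeff_delta_eq_0:
  assumes "\<And>m. m < N \<Longrightarrow> delta d g m = 0"
    and "delta d (delta d g) N = 0"
    and "\<And>n. d n 0 = 0"
  shows "d 0 (delta d g N) = 0"
proof (cases N)
  case 0
  then show ?thesis using assms(2) by (simp add: delta_def)
next
  case (Suc n)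
  then show ?thesis using assms by (simp add: delta_Suc)
qed

fun lift_series :: "(nat \<Rightarrow> 'v \<Rightarrow> 'v::ab_group_add) \<Rightarrow> ('v \<Rightarrow> 'v) \<Rightarrow> 'v \<Rightarrow> nat \<Rightarrow> 'v" where
  "lift_series d W x 0 = x"
| "lift_series d W x (Suc n) = - W (\<Sum>p\<le>n. d (Suc p) (lift_series d W x (n - p)))"

lemma lift_series_cocycle:
  assumes graded: "\<And>n. graded_operator A (d n)"
    and flat: "\<And>f. f \<in> pser A i \<Longrightarrow> delta d (delta d f) = 0"
    and primitive: "\<And>y. y \<in> cocycles (d 0) A (i + 1) \<Longrightarrow> W y \<in> A i \<and> d 0 (W y) = y"
    and x: "x \<in> cocycles (d 0) A i"
  shows "lift_series d W x \<in> cocycles (delta d) (pser A) i"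
proof -
  interpret d: graded_operator A "d n" for n by (rule graded)
  interpret delta: graded_operator "pser A" "delta d" by (rule graded_operator_delta[OF graded])
  let ?f = "lift_series d W x"
  have "?f N \<in> A i \<and> delta d ?f N = 0" for N
  proof (induction N rule: less_induct)
    case (less N)
    show ?case
    proof (cases N)
      case 0
      then show ?thesis using x by (simp add: cocycles_def delta_def)
    next
      case (Suc n)
      have below: "?f k \<in> A i" "delta d ?f k = 0" if "k \<le> n" for k
        using less.IH[of k] that Suc by simp_all
      define g where "g k = (if k \<le> n then ?f k else 0)" for k
      let ?y = "\<Sum>p\<le>n. d (Suc p) (?f (n - p))"
      have g: "g \<in> pser A i"
        using below by (simp add: g_def pser_def)
      have "delta d g m = 0" if "m < N" for m
        using that Suc below(2)[of m] delta_cong[of m g ?f] by (simp add: g_def)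
      then have "d 0 (delta d g N) = 0"
        by (rule d0_lowest_coeff_delta_eq_0) (simp_all add: flat[OF g])
      moreover have "delta d g N = ?y"
        using Suc by (simp add: delta_Suc g_def)
      moreover have "delta d g N \<in> A (i + 1)"
        using delta.D_degree[OF g] by (simp add: pser_def)
      ultimately have "W ?y \<in> A i \<and> d 0 (W ?y) = ?y"
        by (intro primitive) (simp add: cocycles_def)
      then show ?thesis
        using Suc by (simp add: delta_Suc d.uminus_mem d.D_uminus)
    qed
  qed
  then show ?thesis by (simp add: cocycles_def pser_def fun_eq_iff)
qed

lemma cocycles_lift_if_next_cohom_trivial:
  assumes graded: "\<And>n. graded_operator A (d n)"
    and flat: "\<And>f. f \<in> pser A i \<Longrightarrow> delta d (delta d f) = 0"
    and vanish: "cohom (d 0) A (i + 1) = {cls (d 0) A (i + 1) 0}"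
    and x: "x \<in> cocycles (d 0) A i"
  shows "\<exists>f \<in> cocycles (delta d) (pser A) i. varpi f = x"
proof -
  define W where "W y = (SOME w. w \<in> A i \<and> d 0 w = y)" for y
  have "W y \<in> A i \<and> d 0 (W y) = y" if "y \<in> cocycles (d 0) A (i + 1)" for y
  proof -
    have "y \<in> coboundaries (d 0) A (i + 1)"
      using graded_operator.coboundary_if_cohom_trivial[OF graded vanish that] .
    then have "\<exists>w. w \<in> A i \<and> d 0 w = y" unfolding coboundaries_def by auto
    then show ?thesis unfolding W_def by (rule someI_ex)
  qed
  then have "lift_series d W x \<in> cocycles (delta d) (pser A) i"
    using lift_series_cocycle[OF graded flat _ x] by blast
  moreover have "varpi (lift_series d W x) = x" by (simp add: varpi_def)
  ultimately show ?thesis by blast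
qed

theorem lemma7p14:
  fixes scale :: "'k::field \<Rightarrow> 'v::ab_group_add \<Rightarrow> 'v"
    and A :: "int \<Rightarrow> 'v set"
    and d :: "nat \<Rightarrow> 'v \<Rightarrow> 'v"
    and i :: int
  assumes vs: "vector_space scale"
    and sub: "\<And>j. module.subspace scale (A j)"
    and lin: "\<And>n. Vector_Spaces.linear scale scale (d n)"
    and deg: "\<And>n j x. x \<in> A j \<Longrightarrow> d n x \<in> A (j + 1)"
    and flat: "\<And>j f. f \<in> pser A j \<Longrightarrow> delta d (delta d f) = (\<lambda>n. 0)"
    and vanish: "cohom (d 0) A (i + 1) = {cls (d 0) A (i + 1) 0}"
  shows "induced varpi (d 0) A i ` cohom (delta d) (pser A) i = cohom (d 0) A i"
proof -
  have "module scale" using vs by (simp add: vector_space_def module_def)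
  then have graded: "graded_operator A (d n)" for n
    using sub lin deg
    by unfold_locales (auto simp: module.subspace_0 module.subspace_add module.subspace_neg
        Vector_Spaces.linear_iff)
  interpret cochain_map "pser A" "delta d" A "d 0" varpi
    by (rule cochain_map_varpi[OF graded])
  show ?thesis
    using cocycles_lift_if_next_cohom_trivial[OF graded flat[folded zero_fun_def] vanish]
    by (rule induced_cohom_eq_if_cocycles_lift)
qed

end
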